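(* Let $n\ge1$, $L,\underline b>0$, and let $(k_p,k_i)\in(0,\infty)^2$ satisfy $k_p^2\underline b>k_pL+k_i+L^2/(4\underline b)$. Then the $2n\times2n$ matrix $$P=\begin{bmatrix}2k_pk_i\underline bI_n&k_iI_n\\k_iI_n&k_pI_n\end{bmatrix}$$ is positive definite. Moreover, there exists $\gamma>0$, depending only on $(k_i,k_p,L,\underline b)$, such that for all $n\times n$ real matrices $a,\theta$ with $\|a\|\le L$ and $\mathrm{Sym}[\theta]\ge\underline bI_n$, the matrix $$A=\begin{bmatrix}0_n&I_n\\-k_i\theta&a-k_p\theta\end{bmatrix}$$ satisfies $PA+A^{\mathsf T}P\le-\gamma I_{2n}$.
   Context: $\|\cdot\|$ is the operator norm induced by the Euclidean norm; $\mathrm{Sym}[\theta]=(\theta+\theta^{\mathsf T})/2$; for symmetric matrices, $S_1\ge S_2$ means $S_1-S_2$ is positive semidefinite; $0_n$ and $I_n$ are the $n\times n$ zero and identity matrices. *)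

theory Defs
  imports "Jordan_Normal_Form.Matrix"
begin

definition vec_norm :: "real vec \<Rightarrow> real" where
  "vec_norm x = sqrt (x \<bullet> x)"

definition mat_opnorm :: "real mat \<Rightarrow> real" where
  "mat_opnorm A = Sup {vec_norm (A *\<^sub>v x) | x. x \<in> carrier_vec (dim_col A) \<and> vec_norm x \<le> 1}"

definition sym_part :: "real mat \<Rightarrow> real mat" where
  "sym_part A = (1/2) \<cdot>\<^sub>m (A + transpose_mat A)"

definition psd :: "nat \<Rightarrow> real mat \<Rightarrow> bool" where
  "psd n S \<longleftrightarrow> S \<in> carrier_mat n n \<and> transpose_mat S = S \<and>
     (\<forall>x \<in> carrier_vec n. 0 \<le> x \<bullet> (S *\<^sub>v x))"

definition loewner_le :: "nat \<Rightarrow> real mat \<Rightarrow> real mat \<Rightarrow> bool" where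
  "loewner_le n S1 S2 \<longleftrightarrow> S1 \<in> carrier_mat n n \<and> S2 \<in> carrier_mat n n \<and> psd n (S2 - S1)"

definition pos_def :: "nat \<Rightarrow> real mat \<Rightarrow> bool" where
  "pos_def m P \<longleftrightarrow> P \<in> carrier_mat m m \<and> transpose_mat P = P \<and>
     (\<forall>x \<in> carrier_vec m. x \<noteq> 0\<^sub>v m \<longrightarrow> 0 < x \<bullet> (P *\<^sub>v x))"

definition Pmat :: "nat \<Rightarrow> real \<Rightarrow> real \<Rightarrow> real \<Rightarrow> real mat" where
  "Pmat n kp ki b = four_block_mat
     ((2 * kp * ki * b) \<cdot>\<^sub>m 1\<^sub>m n) (ki \<cdot>\<^sub>m 1\<^sub>m n)
     (ki \<cdot>\<^sub>m 1\<^sub>m n) (kp \<cdot>\<^sub>m 1\<^sub>m n)"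

definition Amat :: "nat \<Rightarrow> real \<Rightarrow> real \<Rightarrow> real mat \<Rightarrow> real mat \<Rightarrow> real mat" where
  "Amat n kp ki a \<theta> = four_block_mat
     (0\<^sub>m n n) (1\<^sub>m n)
     (- (ki \<cdot>\<^sub>m \<theta>)) (a - kp \<cdot>\<^sub>m \<theta>)"

end

theory Submission
  imports Defs
begin

text \<open>
  Split \<open>z = (u, v)\<close> with \<open>s = |u|\<close>, \<open>t = |v|\<close>. By Cauchy-Schwarz,
  \<open>z\<^sup>T P z \<ge> 2 k\<^sub>p k\<^sub>i b s\<^sup>2 - 2 k\<^sub>i s t + k\<^sub>p t\<^sup>2\<close>, a positive definite binary form
  since \<open>k\<^sub>i < 2 k\<^sub>p\<^sup>2 b\<close>. For the Lyapunov inequality put \<open>w = k\<^sub>i u + k\<^sub>p v\<close>; then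
  \<open>(P z)\<^sup>T (A z) = 2 k\<^sub>p k\<^sub>i b u\<^sup>T v + k\<^sub>i t\<^sup>2 + w\<^sup>T a v - w\<^sup>T \<theta> w\<close>, and \<open>w\<^sup>T \<theta> w \<ge> b |w|\<^sup>2\<close>
  cancels the cross term \<open>u\<^sup>T v\<close>. With \<open>|a v| \<le> L t\<close> what remains is bounded by
  \<open>-(k\<^sub>i\<^sup>2 b s\<^sup>2 - k\<^sub>i L s t + (k\<^sub>p\<^sup>2 b - k\<^sub>p L - k\<^sub>i) t\<^sup>2)\<close>, a positive definite binary form
  exactly when \<open>k\<^sub>p\<^sup>2 b > k\<^sub>p L + k\<^sub>i + L\<^sup>2/(4b)\<close>. Its coercivity constant is independent of
  \<open>n\<close>, \<open>a\<close> and \<open>\<theta>\<close>.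
\<close>

lemma binary_quadratic_form_nonneg:
  fixes A B C s t :: real
  assumes "A > 0" and "B\<^sup>2 \<le> 4 * A * C"
  shows "0 \<le> A * s\<^sup>2 - B * s * t + C * t\<^sup>2"
proof -
  have "0 \<le> (2 * A * s - B * t)\<^sup>2 + (4 * A * C - B\<^sup>2) * t\<^sup>2"
    using assms by simp
  also have "\<dots> = 4 * A * (A * s\<^sup>2 - B * s * t + C * t\<^sup>2)"
    by (simp add: power2_eq_square algebra_simps)
  finally show ?thesis
    using \<open>A > 0\<close> by (simp add: zero_le_mult_iff)
qed

lemma binary_quadratic_form_coercive:
  fixes A B C :: real
  assumes A: "A > 0" and C: "C > 0" and disc: "B\<^sup>2 < 4 * A * C"
  shows "\<exists>\<mu>>0. \<forall>s t. \<mu> * (s\<^sup>2 + t\<^sup>2) \<le> A * s\<^sup>2 - B * s * t + C * t\<^sup>2"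
proof -
  \<comment> \<open>chosen so that \<open>4 (A - \<mu>) (C - \<mu>) = B\<^sup>2 + 4 \<mu>\<^sup>2\<close>\<close>
  define \<mu> where "\<mu> = (4 * A * C - B\<^sup>2) / (4 * (A + C))"
  have \<mu>: "4 * (A + C) * \<mu> = 4 * A * C - B\<^sup>2"
    using A C unfolding \<mu>_def by simp
  have "\<mu> > 0"
    using A C disc unfolding \<mu>_def by simp
  have "4 * (A + C) * \<mu> < 4 * (A + C) * A"
  proof -
    have "4 * (A + C) * A = 4 * A * A + 4 * A * C"
      by (simp add: algebra_simps)
    then show ?thesis
      using \<mu> mult_pos_pos[OF A A] zero_le_power2[of B] by linarith
  qed
  then have "A - \<mu> > 0"
    using A C by simp
  moreover have "B\<^sup>2 \<le> 4 * (A - \<mu>) * (C - \<mu>)"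
  proof -
    have "4 * (A - \<mu>) * (C - \<mu>) = 4 * A * C - 4 * (A + C) * \<mu> + 4 * \<mu>\<^sup>2"
      by (simp add: power2_eq_square algebra_simps)
    then show ?thesis
      using \<mu> by simp
  qed
  ultimately have "\<forall>s t. 0 \<le> (A - \<mu>) * s\<^sup>2 - B * s * t + (C - \<mu>) * t\<^sup>2"
    using binary_quadratic_form_nonneg by blast
  then show ?thesis
    using \<open>\<mu> > 0\<close> by (intro exI[of _ \<mu>]) (simp add: algebra_simps)
qed

lemma scalar_prod_self_nonneg: "0 \<le> (x :: real vec) \<bullet> x"
  using conjugate_square_ge_0_vec[of x] by simp

lemma vec_norm_nonneg: "0 \<le> vec_norm x"
  unfolding vec_norm_def by (simp add: scalar_prod_self_nonneg)

lemma vec_norm_square: "(vec_norm x)\<^sup>2 = x \<bullet> x"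
  unfolding vec_norm_def by (simp add: scalar_prod_self_nonneg)

lemma vec_norm_smult: "vec_norm (c \<cdot>\<^sub>v x) = \<bar>c\<bar> * vec_norm x"
proof -
  have "(c \<cdot>\<^sub>v x) \<bullet> (c \<cdot>\<^sub>v x) = c\<^sup>2 * (x \<bullet> x)"
    by (simp add: power2_eq_square)
  then show ?thesis
    unfolding vec_norm_def by (simp add: real_sqrt_mult)
qed

lemma scalar_prod_square_le:
  fixes x y :: "real vec"
  assumes x: "x \<in> carrier_vec n" and y: "y \<in> carrier_vec n"
  shows "(x \<bullet> y)\<^sup>2 \<le> (x \<bullet> x) * (y \<bullet> y)"
proof (cases "y \<bullet> y = 0")
  case True
  then have "y = 0\<^sub>v n"
    using conjugate_square_eq_0_vec[OF y] by simp
  then show ?thesis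
    using x by simp
next
  case False
  then have pos: "y \<bullet> y > 0"
    using scalar_prod_self_nonneg[of y] by simp
  define r where "r = (x \<bullet> y) / (y \<bullet> y)"
  have "0 \<le> (x - r \<cdot>\<^sub>v y) \<bullet> (x - r \<cdot>\<^sub>v y)"
    by (rule scalar_prod_self_nonneg)
  also have "\<dots> = x \<bullet> x - 2 * r * (x \<bullet> y) + r\<^sup>2 * (y \<bullet> y)"
    using x y
    by (simp add: minus_scalar_prod_distrib[of _ n] scalar_prod_minus_distrib[of _ n]
        comm_scalar_prod[of y n x] power2_eq_square algebra_simps)
  also have "\<dots> = x \<bullet> x - (x \<bullet> y)\<^sup>2 / (y \<bullet> y)"
    using pos by (simp add: r_def power2_eq_square)
  finally show ?thesis
    using pos by (simp add: field_simps)
qed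

lemma abs_scalar_prod_le_vec_norm_mult:
  fixes x y :: "real vec"
  assumes "x \<in> carrier_vec n" and "y \<in> carrier_vec n"
  shows "\<bar>x \<bullet> y\<bar> \<le> vec_norm x * vec_norm y"
proof -
  have "\<bar>x \<bullet> y\<bar> = sqrt ((x \<bullet> y)\<^sup>2)"
    by simp
  also have "\<dots> \<le> sqrt ((x \<bullet> x) * (y \<bullet> y))"
    using scalar_prod_square_le[OF assms] by (rule real_sqrt_le_mono)
  finally show ?thesis
    unfolding vec_norm_def by (simp add: real_sqrt_mult)
qed

lemma carrier_vec_append_cases:
  assumes "z \<in> carrier_vec (2 * n)"
  obtains u v where "u \<in> carrier_vec n" and "v \<in> carrier_vec n" and "z = u @\<^sub>v v"
  using assms by (intro that[of "vec_first z n" "vec_last z n"]) (auto simp: mult_2)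

lemma scalar_prod_append_self:
  fixes u v :: "real vec"
  assumes "u \<in> carrier_vec n" and "v \<in> carrier_vec n"
  shows "(u @\<^sub>v v) \<bullet> (u @\<^sub>v v) = (vec_norm u)\<^sup>2 + (vec_norm v)\<^sup>2"
  using assms by (simp add: scalar_prod_append[of _ n _ n] vec_norm_square)

lemma vec_norm_mult_mat_vec_le_frobenius:
  fixes a :: "real mat"
  assumes a: "a \<in> carrier_mat n m" and x: "x \<in> carrier_vec m"
  shows "vec_norm (a *\<^sub>v x) \<le> sqrt (\<Sum>i<n. row a i \<bullet> row a i) * vec_norm x"
proof -
  have "(a *\<^sub>v x) \<bullet> (a *\<^sub>v x) = (\<Sum>i<n. (row a i \<bullet> x)\<^sup>2)"
    using a unfolding scalar_prod_def[of "a *\<^sub>v x"]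
    by (simp add: power2_eq_square lessThan_atLeast0)
  also have "\<dots> \<le> (\<Sum>i<n. (row a i \<bullet> row a i) * (x \<bullet> x))"
    using a x by (intro sum_mono scalar_prod_square_le[of _ m]) auto
  finally show ?thesis
    unfolding vec_norm_def by (simp add: real_sqrt_mult[symmetric] sum_distrib_right)
qed

lemma vec_norm_mult_mat_vec_le_opnorm:
  fixes a :: "real mat"
  assumes a: "a \<in> carrier_mat n m" and x: "x \<in> carrier_vec m"
  shows "vec_norm (a *\<^sub>v x) \<le> mat_opnorm a * vec_norm x"
proof -
  define K where "K = sqrt (\<Sum>i<n. row a i \<bullet> row a i)"
  have frob: "vec_norm (a *\<^sub>v y) \<le> K * vec_norm y" if "y \<in> carrier_vec m" for y
    unfolding K_def by (rule vec_norm_mult_mat_vec_le_frobenius[OF a that])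
  let ?S = "{vec_norm (a *\<^sub>v y) | y. y \<in> carrier_vec (dim_col a) \<and> vec_norm y \<le> 1}"
  have "bdd_above ?S"
  proof (rule bdd_aboveI)
    fix r assume "r \<in> ?S"
    then obtain y where y: "y \<in> carrier_vec m" "vec_norm y \<le> 1" and r: "r = vec_norm (a *\<^sub>v y)"
      using a by auto
    have "0 \<le> K"
      unfolding K_def by (simp add: sum_nonneg scalar_prod_self_nonneg)
    then show "r \<le> K"
      using frob[OF y(1)] y(2) r by (smt (verit) mult_left_le)
  qed
  show ?thesis
  proof (cases "vec_norm x = 0")
    case True
    then show ?thesis
      using frob[OF x] vec_norm_nonneg[of "a *\<^sub>v x"] by simp
  next
    case False
    then have N: "vec_norm x > 0"
      using vec_norm_nonneg[of x] by simp
    define y where "y = (1 / vec_norm x) \<cdot>\<^sub>v x"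
    have "y \<in> carrier_vec m" and "vec_norm y = 1"
      using x N unfolding y_def by (auto simp: vec_norm_smult)
    then have "vec_norm (a *\<^sub>v y) \<le> mat_opnorm a"
      unfolding mat_opnorm_def using a by (intro cSup_upper[OF _ \<open>bdd_above ?S\<close>]) auto
    moreover have "a *\<^sub>v y = (1 / vec_norm x) \<cdot>\<^sub>v (a *\<^sub>v x)"
      unfolding y_def using mult_mat_vec[OF a x] .
    ultimately show ?thesis
      using N by (simp add: vec_norm_smult field_simps)
  qed
qed

lemma smult_mat_mult_vec:
  "dim_col A = dim_vec v \<Longrightarrow> (k \<cdot>\<^sub>m A) *\<^sub>v v = k \<cdot>\<^sub>v (A *\<^sub>v v)"
  for A :: "'a :: comm_semiring_0 mat"
  by (rule eq_vecI) (auto simp: scalar_prod_def sum_distrib_left ac_simps)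

lemma loewner_le_sym_part_quadratic_form:
  fixes \<theta> :: "real mat"
  assumes th: "\<theta> \<in> carrier_mat n n" and le: "loewner_le n (b \<cdot>\<^sub>m 1\<^sub>m n) (sym_part \<theta>)"
    and w: "w \<in> carrier_vec n"
  shows "b * (w \<bullet> w) \<le> w \<bullet> (\<theta> *\<^sub>v w)"
proof -
  have S: "sym_part \<theta> \<in> carrier_mat n n"
    using th unfolding sym_part_def by auto
  have "0 \<le> w \<bullet> ((sym_part \<theta> - b \<cdot>\<^sub>m 1\<^sub>m n) *\<^sub>v w)"
    using le w unfolding loewner_le_def psd_def by auto
  also have "(sym_part \<theta> - b \<cdot>\<^sub>m 1\<^sub>m n) *\<^sub>v w = sym_part \<theta> *\<^sub>v w - b \<cdot>\<^sub>v w"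
    using S w by (simp add: minus_mult_distrib_mat_vec[OF S _ w] smult_mat_mult_vec)
  also have "sym_part \<theta> *\<^sub>v w = (1/2) \<cdot>\<^sub>v (\<theta> *\<^sub>v w + transpose_mat \<theta> *\<^sub>v w)"
    unfolding sym_part_def using th w by (simp add: smult_mat_mult_vec add_mult_distrib_mat_vec[of _ n n])
  also have "w \<bullet> ((1/2) \<cdot>\<^sub>v (\<theta> *\<^sub>v w + transpose_mat \<theta> *\<^sub>v w) - b \<cdot>\<^sub>v w)
      = (1/2) * (w \<bullet> (\<theta> *\<^sub>v w) + w \<bullet> (transpose_mat \<theta> *\<^sub>v w)) - b * (w \<bullet> w)"
    using th w by (simp add: scalar_prod_minus_distrib[of _ n] scalar_prod_add_distrib[of _ n])
  also have "w \<bullet> (transpose_mat \<theta> *\<^sub>v w) = w \<bullet> (\<theta> *\<^sub>v w)"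
    using th w by (simp add: comm_scalar_prod[of w n] transpose_vec_mult_scalar[OF th w w])
  finally show ?thesis
    by simp
qed

lemma loewner_le_smult_one_matI:
  fixes Q :: "real mat"
  assumes Q: "Q \<in> carrier_mat m m" and sym: "transpose_mat Q = Q"
    and bound: "\<And>z. z \<in> carrier_vec m \<Longrightarrow> z \<bullet> (Q *\<^sub>v z) \<le> c * (z \<bullet> z)"
  shows "loewner_le m Q (c \<cdot>\<^sub>m 1\<^sub>m m)"
  unfolding loewner_le_def psd_def
proof (intro conjI ballI Q)
  have C: "c \<cdot>\<^sub>m 1\<^sub>m m \<in> carrier_mat m m"
    by simp
  show "c \<cdot>\<^sub>m 1\<^sub>m m \<in> carrier_mat m m" "c \<cdot>\<^sub>m 1\<^sub>m m - Q \<in> carrier_mat m m"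
    using Q by auto
  have "transpose_mat (c \<cdot>\<^sub>m 1\<^sub>m m) = c \<cdot>\<^sub>m 1\<^sub>m m"
    by (rule eq_matI) auto
  then show "transpose_mat (c \<cdot>\<^sub>m 1\<^sub>m m - Q) = c \<cdot>\<^sub>m 1\<^sub>m m - Q"
    using sym by (simp add: transpose_minus[OF C Q])
  fix z :: "real vec" assume z: "z \<in> carrier_vec m"
  have "z \<bullet> ((c \<cdot>\<^sub>m 1\<^sub>m m - Q) *\<^sub>v z) = c * (z \<bullet> z) - z \<bullet> (Q *\<^sub>v z)"
    using Q z
    by (simp add: minus_mult_distrib_mat_vec[OF C Q z] smult_mat_mult_vec scalar_prod_minus_distrib[of _ m])
  then show "0 \<le> z \<bullet> ((c \<cdot>\<^sub>m 1\<^sub>m m - Q) *\<^sub>v z)"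
    using bound[OF z] by simp
qed

lemma pos_defI_coercive:
  fixes P :: "real mat"
  assumes "P \<in> carrier_mat m m" and "transpose_mat P = P" and "\<mu> > 0"
    and bound: "\<And>z. z \<in> carrier_vec m \<Longrightarrow> \<mu> * (z \<bullet> z) \<le> z \<bullet> (P *\<^sub>v z)"
  shows "pos_def m P"
  unfolding pos_def_def
proof (intro conjI ballI impI assms)
  fix z :: "real vec" assume z: "z \<in> carrier_vec m" and "z \<noteq> 0\<^sub>v m"
  then have "z \<bullet> z > 0"
    using conjugate_square_greater_0_vec[OF z] by simp
  then show "0 < z \<bullet> (P *\<^sub>v z)"
    using bound[OF z] \<open>\<mu> > 0\<close> by (smt (verit) mult_pos_pos)
qed

lemma transpose_lyapunov_mat:
  fixes P A :: "real mat"
  assumes P: "P \<in> carrier_mat m m" and "transpose_mat P = P" and A: "A \<in> carrier_mat m m"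
  shows "transpose_mat (P * A + transpose_mat A * P) = P * A + transpose_mat A * P"
  using assms
  by (simp add: transpose_add[of _ m m] transpose_mult[of _ m m] comm_add_mat[of _ m m])

lemma lyapunov_quadratic_form:
  fixes P A :: "real mat"
  assumes P: "P \<in> carrier_mat m m" and sym: "transpose_mat P = P" and A: "A \<in> carrier_mat m m"
    and z: "z \<in> carrier_vec m"
  shows "z \<bullet> ((P * A + transpose_mat A * P) *\<^sub>v z) = 2 * ((P *\<^sub>v z) \<bullet> (A *\<^sub>v z))"
proof -
  have "z \<bullet> ((P * A + transpose_mat A * P) *\<^sub>v z)
      = z \<bullet> (P *\<^sub>v (A *\<^sub>v z)) + z \<bullet> (transpose_mat A *\<^sub>v (P *\<^sub>v z))"
    using P A z by (simp add: add_mult_distrib_mat_vec[of _ m m] scalar_prod_add_distrib[of _ m])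
  also have "z \<bullet> (P *\<^sub>v (A *\<^sub>v z)) = (P *\<^sub>v z) \<bullet> (A *\<^sub>v z)"
    using transpose_vec_mult_scalar[OF P, of "A *\<^sub>v z" z] P A z sym by simp
  also have "z \<bullet> (transpose_mat A *\<^sub>v (P *\<^sub>v z)) = (P *\<^sub>v z) \<bullet> (A *\<^sub>v z)"
    using transpose_vec_mult_scalar[OF A z, of "P *\<^sub>v z"] P A z
    by (simp add: comm_scalar_prod[of z m])
  finally show ?thesis
    by simp
qed

lemma Pmat_carrier: "Pmat n kp ki b \<in> carrier_mat (2 * n) (2 * n)"
  unfolding Pmat_def mult_2 by (rule four_block_carrier_mat) auto

lemma transpose_Pmat: "transpose_mat (Pmat n kp ki b) = Pmat n kp ki b"
  unfolding Pmat_def by (subst transpose_four_block_mat) auto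

lemma Amat_carrier:
  "a \<in> carrier_mat n n \<Longrightarrow> \<theta> \<in> carrier_mat n n \<Longrightarrow> Amat n kp ki a \<theta> \<in> carrier_mat (2 * n) (2 * n)"
  unfolding Amat_def mult_2 by (rule four_block_carrier_mat) auto

lemma Pmat_mult_append:
  assumes "u \<in> carrier_vec n" and "v \<in> carrier_vec n"
  shows "Pmat n kp ki b *\<^sub>v (u @\<^sub>v v) =
    ((2 * kp * ki * b) \<cdot>\<^sub>v u + ki \<cdot>\<^sub>v v) @\<^sub>v (ki \<cdot>\<^sub>v u + kp \<cdot>\<^sub>v v)"
  unfolding Pmat_def using assms by (subst four_block_mat_mult_vec[of _ n n _ n _ n]) auto

lemma Amat_mult_append:
  fixes a \<theta> :: "real mat"
  assumes "a \<in> carrier_mat n n" and "\<theta> \<in> carrier_mat n n"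
    and "u \<in> carrier_vec n" and "v \<in> carrier_vec n"
  shows "Amat n kp ki a \<theta> *\<^sub>v (u @\<^sub>v v) = v @\<^sub>v (a *\<^sub>v v - \<theta> *\<^sub>v (ki \<cdot>\<^sub>v u + kp \<cdot>\<^sub>v v))"
  unfolding Amat_def using assms
  by (subst four_block_mat_mult_vec[of _ n n _ n _ n]) (auto intro!: eq_vecI simp: algebra_simps)

lemma Pmat_quadratic_form_ge:
  fixes u v :: "real vec"
  assumes "ki \<ge> 0" and u: "u \<in> carrier_vec n" and v: "v \<in> carrier_vec n"
  shows "2 * kp * ki * b * (vec_norm u)\<^sup>2 - 2 * ki * vec_norm u * vec_norm v + kp * (vec_norm v)\<^sup>2
    \<le> (u @\<^sub>v v) \<bullet> (Pmat n kp ki b *\<^sub>v (u @\<^sub>v v))"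
proof -
  have "(u @\<^sub>v v) \<bullet> (Pmat n kp ki b *\<^sub>v (u @\<^sub>v v))
      = 2 * kp * ki * b * (u \<bullet> u) + 2 * ki * (u \<bullet> v) + kp * (v \<bullet> v)"
    using u v
    by (simp add: Pmat_mult_append scalar_prod_append[of _ n _ n] scalar_prod_add_distrib[of _ n]
        comm_scalar_prod[of v n u] algebra_simps)
  moreover have "ki * (- (vec_norm u * vec_norm v)) \<le> ki * (u \<bullet> v)"
    using abs_scalar_prod_le_vec_norm_mult[OF u v] \<open>ki \<ge> 0\<close> by (intro mult_left_mono) auto
  ultimately show ?thesis
    by (simp add: vec_norm_square algebra_simps)
qed

lemma Pmat_Amat_quadratic_form_le:
  fixes a \<theta> :: "real mat" and u v :: "real vec"
  assumes kp: "kp \<ge> 0" and ki: "ki \<ge> 0"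
    and a: "a \<in> carrier_mat n n" and th: "\<theta> \<in> carrier_mat n n"
    and aL: "mat_opnorm a \<le> L" and le: "loewner_le n (b \<cdot>\<^sub>m 1\<^sub>m n) (sym_part \<theta>)"
    and u: "u \<in> carrier_vec n" and v: "v \<in> carrier_vec n"
  shows "(Pmat n kp ki b *\<^sub>v (u @\<^sub>v v)) \<bullet> (Amat n kp ki a \<theta> *\<^sub>v (u @\<^sub>v v))
    \<le> - (ki\<^sup>2 * b * (vec_norm u)\<^sup>2 - ki * L * vec_norm u * vec_norm v
          + (kp\<^sup>2 * b - kp * L - ki) * (vec_norm v)\<^sup>2)"
proof -
  define s t where "s = vec_norm u" and "t = vec_norm v"
  define w where "w = ki \<cdot>\<^sub>v u + kp \<cdot>\<^sub>v v"
  have w: "w \<in> carrier_vec n" and av: "a *\<^sub>v v \<in> carrier_vec n"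
    using u v a unfolding w_def by auto
  have "vec_norm (a *\<^sub>v v) \<le> L * t"
    unfolding t_def
    by (rule order_trans[OF vec_norm_mult_mat_vec_le_opnorm[OF a v] mult_right_mono[OF aL vec_norm_nonneg]])
  then have "y \<bullet> (a *\<^sub>v v) \<le> vec_norm y * (L * t)" if "y \<in> carrier_vec n" for y
    using abs_scalar_prod_le_vec_norm_mult[OF that av] vec_norm_nonneg[of y]
    by (smt (verit) mult_left_mono)
  then have "w \<bullet> (a *\<^sub>v v) \<le> ki * (s * (L * t)) + kp * (t * (L * t))"
    unfolding w_def s_def t_def using u v av kp ki
    by (simp add: add_scalar_prod_distrib[of _ n] add_mono mult_left_mono)
  moreover have "b * (w \<bullet> w) \<le> w \<bullet> (\<theta> *\<^sub>v w)"
    by (rule loewner_le_sym_part_quadratic_form[OF th le w])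
  moreover have "w \<bullet> w = ki\<^sup>2 * s\<^sup>2 + 2 * ki * kp * (u \<bullet> v) + kp\<^sup>2 * t\<^sup>2"
    unfolding w_def s_def t_def vec_norm_square using u v
    by (simp add: add_scalar_prod_distrib[of _ n] scalar_prod_add_distrib[of _ n]
        comm_scalar_prod[of v n u] power2_eq_square algebra_simps)
  moreover have "(Pmat n kp ki b *\<^sub>v (u @\<^sub>v v)) \<bullet> (Amat n kp ki a \<theta> *\<^sub>v (u @\<^sub>v v))
      = 2 * kp * ki * b * (u \<bullet> v) + ki * t\<^sup>2 + w \<bullet> (a *\<^sub>v v) - w \<bullet> (\<theta> *\<^sub>v w)"
    unfolding w_def t_def vec_norm_square using a th u v
    by (simp add: Pmat_mult_append Amat_mult_append scalar_prod_append[of _ n _ n]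
        add_scalar_prod_distrib[of _ n] scalar_prod_minus_distrib[of _ n] algebra_simps)
  ultimately show ?thesis
    unfolding s_def[symmetric] t_def[symmetric] by (simp add: power2_eq_square algebra_simps)
qed

lemma Pmat_pos_def:
  fixes b kp ki :: real
  assumes "b > 0" and "kp > 0" and "ki > 0" and "ki < 2 * kp\<^sup>2 * b"
  shows "pos_def (2 * n) (Pmat n kp ki b)"
proof -
  have "(2 * ki)\<^sup>2 < 4 * (2 * kp * ki * b) * kp"
    using mult_strict_left_mono[OF \<open>ki < 2 * kp\<^sup>2 * b\<close> \<open>ki > 0\<close>]
    by (simp add: power2_eq_square algebra_simps)
  then obtain \<mu> where "\<mu> > 0" and coercive:
      "\<And>s t. \<mu> * (s\<^sup>2 + t\<^sup>2) \<le> 2 * kp * ki * b * s\<^sup>2 - 2 * ki * s * t + kp * t\<^sup>2"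
    using binary_quadratic_form_coercive[of "2 * kp * ki * b" kp "2 * ki"] assms by auto
  show ?thesis
  proof (rule pos_defI_coercive[OF Pmat_carrier transpose_Pmat \<open>\<mu> > 0\<close>])
    fix z :: "real vec" assume "z \<in> carrier_vec (2 * n)"
    then obtain u v where u: "u \<in> carrier_vec n" and v: "v \<in> carrier_vec n" and z: "z = u @\<^sub>v v"
      by (rule carrier_vec_append_cases)
    show "\<mu> * (z \<bullet> z) \<le> z \<bullet> (Pmat n kp ki b *\<^sub>v z)"
      unfolding z scalar_prod_append_self[OF u v]
      using coercive Pmat_quadratic_form_ge[OF _ u v] \<open>ki > 0\<close> by (smt (verit))
  qed
qed

lemma Pmat_Amat_lyapunov_le:
  fixes a \<theta> :: "real mat"
  assumes "kp \<ge> 0" and "ki \<ge> 0"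
    and coercive: "\<And>s t. \<mu> * (s\<^sup>2 + t\<^sup>2) \<le> ki\<^sup>2 * b * s\<^sup>2 - ki * L * s * t + (kp\<^sup>2 * b - kp * L - ki) * t\<^sup>2"
    and a: "a \<in> carrier_mat n n" and th: "\<theta> \<in> carrier_mat n n"
    and aL: "mat_opnorm a \<le> L" and le: "loewner_le n (b \<cdot>\<^sub>m 1\<^sub>m n) (sym_part \<theta>)"
  shows "loewner_le (2 * n)
    (Pmat n kp ki b * Amat n kp ki a \<theta> + transpose_mat (Amat n kp ki a \<theta>) * Pmat n kp ki b)
    ((- (2 * \<mu>)) \<cdot>\<^sub>m 1\<^sub>m (2 * n))"
proof (rule loewner_le_smult_one_matI)
  note P = Pmat_carrier[of n kp ki b] and A = Amat_carrier[OF a th, of kp ki]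
  show "Pmat n kp ki b * Amat n kp ki a \<theta> + transpose_mat (Amat n kp ki a \<theta>) * Pmat n kp ki b
      \<in> carrier_mat (2 * n) (2 * n)"
    using P A by auto
  show "transpose_mat (Pmat n kp ki b * Amat n kp ki a \<theta> + transpose_mat (Amat n kp ki a \<theta>) * Pmat n kp ki b)
      = Pmat n kp ki b * Amat n kp ki a \<theta> + transpose_mat (Amat n kp ki a \<theta>) * Pmat n kp ki b"
    by (rule transpose_lyapunov_mat[OF P transpose_Pmat A])
  fix z :: "real vec" assume "z \<in> carrier_vec (2 * n)"
  then obtain u v where u: "u \<in> carrier_vec n" and v: "v \<in> carrier_vec n" and z: "z = u @\<^sub>v v"
    by (rule carrier_vec_append_cases)
  show "z \<bullet> ((Pmat n kp ki b * Amat n kp ki a \<theta> + transpose_mat (Amat n kp ki a \<theta>) * Pmat n kp ki b) *\<^sub>v z)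
      \<le> - (2 * \<mu>) * (z \<bullet> z)"
    unfolding lyapunov_quadratic_form[OF P transpose_Pmat A \<open>z \<in> carrier_vec (2 * n)\<close>]
    unfolding z scalar_prod_append_self[OF u v]
    using Pmat_Amat_quadratic_form_le[OF assms(1,2) a th aL le u v]
      coercive[of "vec_norm u" "vec_norm v"] by linarith
qed

theorem proposition4p4:
  fixes L b kp ki :: real
  assumes "L > 0" and "b > 0" and "kp > 0" and "ki > 0"
    and "kp^2 * b > kp * L + ki + L^2 / (4 * b)"
  shows "(\<forall>n\<ge>1. pos_def (2 * n) (Pmat n kp ki b)) \<and>
    (\<exists>\<gamma>>0. \<forall>n\<ge>1. \<forall>a \<theta>. a \<in> carrier_mat n n \<longrightarrow> \<theta> \<in> carrier_mat n n \<longrightarrow>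
        mat_opnorm a \<le> L \<longrightarrow> loewner_le n (b \<cdot>\<^sub>m 1\<^sub>m n) (sym_part \<theta>) \<longrightarrow>
        loewner_le (2 * n)
          (Pmat n kp ki b * Amat n kp ki a \<theta> + transpose_mat (Amat n kp ki a \<theta>) * Pmat n kp ki b)
          ((- \<gamma>) \<cdot>\<^sub>m 1\<^sub>m (2 * n)))"
proof -
  define c where "c = kp\<^sup>2 * b - kp * L - ki"
  have "0 < kp * L" and "0 \<le> L\<^sup>2 / (4 * b)" and "0 < kp\<^sup>2 * b"
    using assms by auto
  then have "ki < 2 * kp\<^sup>2 * b"
    using assms(5) by linarith
  then have pos_def_P: "\<forall>n\<ge>1. pos_def (2 * n) (Pmat n kp ki b)"
    using Pmat_pos_def assms by blast
  have "L\<^sup>2 / (4 * b) < c"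
    using assms(5) unfolding c_def by linarith
  then have "c > 0" and "L\<^sup>2 < 4 * b * c"
    using \<open>0 \<le> L\<^sup>2 / (4 * b)\<close> \<open>b > 0\<close> by (linarith, simp add: field_simps)
  have "(ki * L)\<^sup>2 < 4 * (ki\<^sup>2 * b) * c"
    using mult_strict_left_mono[OF \<open>L\<^sup>2 < 4 * b * c\<close>, of "ki\<^sup>2"] \<open>ki > 0\<close>
    by (simp add: power_mult_distrib algebra_simps)
  then obtain \<mu> where "\<mu> > 0" and coercive:
      "\<And>s t. \<mu> * (s\<^sup>2 + t\<^sup>2) \<le> ki\<^sup>2 * b * s\<^sup>2 - ki * L * s * t + c * t\<^sup>2"
    using binary_quadratic_form_coercive[of "ki\<^sup>2 * b" c "ki * L"] \<open>c > 0\<close> assms by auto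
  show ?thesis
    using pos_def_P Pmat_Amat_lyapunov_le[of kp ki \<mu> b L] \<open>\<mu> > 0\<close> coercive assms
    unfolding c_def by (intro conjI exI[of _ "2 * \<mu>"]) auto
qed

end
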